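(* Let $n\ge3$. The functional $F_n:\mathcal A_n\to\mathbb R$ attains its maximum value at a point $[\mu]\in\mathcal A_n$ if and only if $\mu$ is isomorphic to the commutative associative algebra $\mu_{ca}$ defined on a basis $\{X_1,\dots,X_n\}$ by $\mu_{ca}(X_1,X_1)=X_2$ (all other products of basis vectors zero). In this case $F_n([\mu])=20$.
   Context: $V_n$ is the space of bilinear maps $\mu:\mathbb C^n\times\mathbb C^n\to\mathbb C^n$ with standard Hermitian structures; $\mathcal A_n\subset\mathbb PV_n$ is the projectivization of the algebraic set of associative $\mu\in V_n$. $L^\mu_XY=\mu(X,Y)$, $R^\mu_XY=\mu(Y,X)$, $\mathrm M_\mu=2\sum_i L^\mu_{X_i}(L^\mu_{X_i})^*-2\sum_i (L^\mu_{X_i})^*L^\mu_{X_i}-2\sum_i (R^\mu_{X_i})^*R^\mu_{X_i}$ ($\{X_i\}$ orthonormal), $\|\mu\|^2=\sum_{i,j}\|\mu(X_i,X_j)\|^2$, $F_n([\mu])=\operatorname{tr}\mathrm M_\mu^2/\|\mu\|^4$. Isomorphism of algebras means lying in the same $\mathrm{GL}(n)$-orbit under $g.\mu(X,Y)=g\mu(g^{-1}X,g^{-1}Y)$. *)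

theory Defs
  imports "HOL-Analysis.Analysis"
begin

text \<open>An element mu of V_n (a complex bilinear map C^n x C^n -> C^n) is encoded by its
structure constants w.r.t. the standard (orthonormal) basis e_i of C^n:
mu i j k is the k-th coordinate of mu(e_i, e_j).  The index type 'n has CARD('n) = n.\<close>

type_synonym 'n alg = "'n \<Rightarrow> 'n \<Rightarrow> 'n \<Rightarrow> complex"

definition bil :: "'n::finite alg \<Rightarrow> complex^'n \<Rightarrow> complex^'n \<Rightarrow> complex^'n" where
  "bil mu x y = (\<chi> k. \<Sum>i\<in>UNIV. \<Sum>j\<in>UNIV. x$i * y$j * mu i j k)"

definition associative :: "'n::finite alg \<Rightarrow> bool" where
  "associative mu \<longleftrightarrow> (\<forall>x y z. bil mu (bil mu x y) z = bil mu x (bil mu y z))"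

definition norm2 :: "'n::finite alg \<Rightarrow> real" where
  "norm2 mu = (\<Sum>i\<in>UNIV. \<Sum>j\<in>UNIV. (norm (bil mu (axis i 1) (axis j 1)))^2)"

definition adj :: "complex^'n^'n \<Rightarrow> complex^'n^'n" where
  "adj A = (\<chi> r c. cnj (A$c$r))"

definition Lmat :: "'n::finite alg \<Rightarrow> 'n \<Rightarrow> complex^'n^'n" where
  "Lmat mu i = (\<chi> k j. mu i j k)"

definition Rmat :: "'n::finite alg \<Rightarrow> 'n \<Rightarrow> complex^'n^'n" where
  "Rmat mu i = (\<chi> k j. mu j i k)"


definition Mmu :: "'n::finite alg \<Rightarrow> complex^'n^'n" where
  "Mmu mu = 2 *\<^sub>R (\<Sum>i\<in>UNIV. Lmat mu i ** adj (Lmat mu i))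
          - 2 *\<^sub>R (\<Sum>i\<in>UNIV. adj (Lmat mu i) ** Lmat mu i)
          - 2 *\<^sub>R (\<Sum>i\<in>UNIV. adj (Rmat mu i) ** Rmat mu i)"

text \<open>F_n([mu]) = tr(M_mu^2) / ||mu||^4 (M_mu is Hermitian, so the trace is real).\<close>
definition Ffun :: "'n::finite alg \<Rightarrow> real" where
  "Ffun mu = Re (trace (Mmu mu ** Mmu mu)) / (norm2 mu)^2"

text \<open>Action of g in GL(n): (g.mu)(X,Y) = g mu(g^{-1}X, g^{-1}Y); isomorphism = same orbit.\<close>
definition isomorphic :: "'n::finite alg \<Rightarrow> 'n alg \<Rightarrow> bool" where
  "isomorphic mu nu \<longleftrightarrow> (\<exists>g::complex^'n^'n. invertible g \<and>
      (\<forall>X Y. g *v bil mu (matrix_inv g *v X) (matrix_inv g *v Y) = bil nu X Y))"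

text \<open>mu_ca on a basis where X_1 = e_a, X_2 = e_b (a \<noteq> b): mu(X_1,X_1) = X_2, others zero.\<close>
definition mu_ca :: "'n \<Rightarrow> 'n \<Rightarrow> 'n alg" where
  "mu_ca a b = (\<lambda>i j k. if i = a \<and> j = a \<and> k = b then 1 else 0)"

end

theory Submission
  imports Defs
begin

text \<open>Write \<open>M\<^sub>\<mu> = 2 (G\<^sub>a - G\<^sub>b)\<close> with Gram matrices \<open>G\<^sub>a = \<Sum> a a\<^sup>*\<close> of the
  \<open>n\<^sup>2\<close> columns \<open>a\<close> of the \<open>L\<^sub>i\<close> and \<open>G\<^sub>b = \<Sum> b b\<^sup>*\<close> of the \<open>2n\<^sup>2\<close> (conjugated) rows
  \<open>b\<close> of the \<open>L\<^sub>i\<close> and \<open>R\<^sub>i\<close>. Then \<open>tr M\<^sub>\<mu>\<^sup>2 = 4 (\<langle>G\<^sub>a,G\<^sub>a\<rangle> + \<langle>G\<^sub>b,G\<^sub>b\<rangle> - 2\<langle>G\<^sub>a,G\<^sub>b\<rangle>)\<close>,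
  where \<open>\<langle>G\<^sub>u,G\<^sub>v\<rangle> = \<Sum> |\<langle>u,v\<rangle>|\<^sup>2\<close>. Cauchy-Schwarz bounds the first two terms by
  \<open>\<parallel>\<mu>\<parallel>\<^sup>4\<close> and \<open>4\<parallel>\<mu>\<parallel>\<^sup>4\<close>, and the cross term is nonnegative, so \<open>F\<^sub>n \<le> 20\<close> on all of
  \<open>V\<^sub>n\<close>. Equality forces all rows \<open>b\<close> to be parallel and orthogonal to all columns \<open>a\<close>,
  which means \<open>\<mu>(x,y) = \<psi>(x) \<psi>(y) w\<close> with \<open>\<psi>(w) = 0\<close>; these are exactly the algebras
  isomorphic to \<open>\<mu>\<^sub>c\<^sub>a\<close>, and they are associative, so \<open>20\<close> is the maximum on \<open>\<A>\<^sub>n\<close>.\<close>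

definition hinner :: "('n::finite \<Rightarrow> complex) \<Rightarrow> ('n \<Rightarrow> complex) \<Rightarrow> complex" where
  "hinner x y = (\<Sum>k\<in>UNIV. x k * cnj (y k))"

definition hnorm2 :: "('n::finite \<Rightarrow> complex) \<Rightarrow> real" where
  "hnorm2 x = (\<Sum>k\<in>UNIV. (cmod (x k))\<^sup>2)"

lemma cnj_hinner: "cnj (hinner x y) = hinner y x"
  by (simp add: hinner_def mult.commute)

lemma of_real_hnorm2: "complex_of_real (hnorm2 x) = hinner x x"
  unfolding hnorm2_def hinner_def of_real_sum complex_norm_square ..

lemma of_real_cmod_hinner_square: "complex_of_real ((cmod (hinner x y))\<^sup>2) = hinner x y * hinner y x"
  by (metis complex_norm_square cnj_hinner)

lemma lagrange_identity:
  fixes x y :: "'n::finite \<Rightarrow> complex"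
  shows "hnorm2 x * hnorm2 y - (cmod (hinner x y))\<^sup>2
    = (\<Sum>k\<in>UNIV. \<Sum>l\<in>UNIV. (cmod (x k * y l - x l * y k))\<^sup>2) / 2"
proof -
  have expand: "(x k * y l - x l * y k) * cnj (x k * y l - x l * y k)
     = (x k * cnj (x k)) * (y l * cnj (y l)) - (x k * cnj (y k)) * (y l * cnj (x l))
       - (x l * cnj (y l)) * (y k * cnj (x k)) + (x l * cnj (x l)) * (y k * cnj (y k))" for k l
    by (simp add: algebra_simps)
  have "(\<Sum>k\<in>UNIV. \<Sum>l\<in>UNIV. (x k * y l - x l * y k) * cnj (x k * y l - x l * y k))
     = 2 * (hinner x x * hinner y y - hinner x y * hinner y x)"
  proof -
    have "(\<Sum>k\<in>UNIV. \<Sum>l\<in>UNIV. (x l * cnj (y l)) * (y k * cnj (x k))) = hinner x y * hinner y x"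
      "(\<Sum>k\<in>UNIV. \<Sum>l\<in>UNIV. (x l * cnj (x l)) * (y k * cnj (y k))) = hinner x x * hinner y y"
      unfolding hinner_def sum_product by (rule sum.swap)+
    then show ?thesis
      unfolding expand by (simp add: sum.distrib sum_subtractf hinner_def sum_product)
  qed
  then have "complex_of_real (\<Sum>k\<in>UNIV. \<Sum>l\<in>UNIV. (cmod (x k * y l - x l * y k))\<^sup>2)
     = complex_of_real (2 * (hnorm2 x * hnorm2 y - (cmod (hinner x y))\<^sup>2))"
    by (simp only: of_real_sum complex_norm_square of_real_mult of_real_diff of_real_numeral
        of_real_hnorm2 of_real_cmod_hinner_square cnj_hinner)
  then show ?thesis
    by (simp only: of_real_eq_iff) simp
qed

lemma cauchy_schwarz: "(cmod (hinner x y))\<^sup>2 \<le> hnorm2 x * hnorm2 y"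
proof -
  have "0 \<le> (\<Sum>k\<in>UNIV. \<Sum>l\<in>UNIV. (cmod (x k * y l - x l * y k))\<^sup>2) / 2"
    by (intro divide_nonneg_pos sum_nonneg) auto
  then show ?thesis
    using lagrange_identity[of x y] by linarith
qed

lemma cauchy_schwarz_eq_iff_parallel:
  "(cmod (hinner x y))\<^sup>2 = hnorm2 x * hnorm2 y \<longleftrightarrow> (\<forall>k l. x k * y l = x l * y k)"
proof -
  have "(cmod (hinner x y))\<^sup>2 = hnorm2 x * hnorm2 y
      \<longleftrightarrow> (\<Sum>k\<in>UNIV. \<Sum>l\<in>UNIV. (cmod (x k * y l - x l * y k))\<^sup>2) = 0"
    using lagrange_identity[of x y] by auto
  also have "\<dots> \<longleftrightarrow> (\<forall>k l. (cmod (x k * y l - x l * y k))\<^sup>2 = 0)"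
    by (simp add: sum_nonneg_eq_0_iff sum_nonneg)
  finally show ?thesis by simp
qed

definition gram :: "('a::finite \<Rightarrow> 'n::finite \<Rightarrow> complex) \<Rightarrow> complex^'n^'n" where
  "gram u = (\<chi> k l. \<Sum>\<alpha>\<in>UNIV. u \<alpha> k * cnj (u \<alpha> l))"

definition gram_pairing :: "('a::finite \<Rightarrow> 'n::finite \<Rightarrow> complex) \<Rightarrow> ('b::finite \<Rightarrow> 'n \<Rightarrow> complex) \<Rightarrow> real" where
  "gram_pairing u v = (\<Sum>\<alpha>\<in>UNIV. \<Sum>\<beta>\<in>UNIV. (cmod (hinner (u \<alpha>) (v \<beta>)))\<^sup>2)"

lemma trace_gram_mult: "trace (gram u ** gram v) = complex_of_real (gram_pairing u v)"
proof -
  define F where "F k l \<alpha> \<beta> = u \<alpha> k * cnj (u \<alpha> l) * (v \<beta> l * cnj (v \<beta> k))" for k l \<alpha> \<beta>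
  have "trace (gram u ** gram v) = (\<Sum>k\<in>UNIV. \<Sum>l\<in>UNIV. \<Sum>\<alpha>\<in>UNIV. \<Sum>\<beta>\<in>UNIV. F k l \<alpha> \<beta>)"
    by (simp add: trace_def matrix_matrix_mult_def gram_def F_def sum_product)
  also have "\<dots> = (\<Sum>k\<in>UNIV. \<Sum>\<alpha>\<in>UNIV. \<Sum>l\<in>UNIV. \<Sum>\<beta>\<in>UNIV. F k l \<alpha> \<beta>)"
    by (intro sum.cong refl sum.swap)
  also have "\<dots> = (\<Sum>\<alpha>\<in>UNIV. \<Sum>k\<in>UNIV. \<Sum>\<beta>\<in>UNIV. \<Sum>l\<in>UNIV. F k l \<alpha> \<beta>)"
    by (subst sum.swap) (intro sum.cong refl sum.swap)
  also have "\<dots> = (\<Sum>\<alpha>\<in>UNIV. \<Sum>\<beta>\<in>UNIV. \<Sum>k\<in>UNIV. \<Sum>l\<in>UNIV. F k l \<alpha> \<beta>)"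
    by (intro sum.cong refl sum.swap)
  also have "\<dots> = (\<Sum>\<alpha>\<in>UNIV. \<Sum>\<beta>\<in>UNIV. hinner (u \<alpha>) (v \<beta>) * hinner (v \<beta>) (u \<alpha>))"
    unfolding hinner_def sum_product F_def by (simp add: mult_ac)
  finally show ?thesis
    unfolding gram_pairing_def of_real_sum of_real_cmod_hinner_square .
qed

lemma gram_pairing_commute: "gram_pairing v u = gram_pairing u v"
proof -
  have cmod_swap: "cmod (hinner y x) = cmod (hinner x y)" for x y :: "'n::finite \<Rightarrow> complex"
    by (metis cnj_hinner complex_mod_cnj)
  show ?thesis
    unfolding gram_pairing_def by (subst sum.swap) (simp only: cmod_swap)
qed

lemma trace_square_gram_diff:
  "trace ((gram u - gram v) ** (gram u - gram v))
    = complex_of_real (gram_pairing u u + gram_pairing v v - 2 * gram_pairing u v)"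
proof -
  have diff_mult: "(A - B) ** C = A ** C - B ** C" "C ** (A - B) = C ** A - C ** B"
    for A B C :: "complex^'n^'n"
    by (simp_all add: matrix_matrix_mult_def vec_eq_iff sum_subtractf algebra_simps)
  show ?thesis
    unfolding diff_mult trace_sub trace_gram_mult gram_pairing_commute[of v u] by simp
qed

lemma gram_pairing_nonneg: "0 \<le> gram_pairing u v"
  unfolding gram_pairing_def by (intro sum_nonneg) auto

lemma gram_pairing_le: "gram_pairing u v \<le> (\<Sum>\<alpha>\<in>UNIV. hnorm2 (u \<alpha>)) * (\<Sum>\<beta>\<in>UNIV. hnorm2 (v \<beta>))"
  unfolding gram_pairing_def sum_product by (intro sum_mono cauchy_schwarz)

lemma gram_pairing_eq_iff_parallel:
  "gram_pairing u v = (\<Sum>\<alpha>\<in>UNIV. hnorm2 (u \<alpha>)) * (\<Sum>\<beta>\<in>UNIV. hnorm2 (v \<beta>))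
    \<longleftrightarrow> (\<forall>\<alpha> \<beta> k l. u \<alpha> k * v \<beta> l = u \<alpha> l * v \<beta> k)"
proof -
  have gap: "0 \<le> hnorm2 (u \<alpha>) * hnorm2 (v \<beta>) - (cmod (hinner (u \<alpha>) (v \<beta>)))\<^sup>2" for \<alpha> \<beta>
    using cauchy_schwarz by simp
  have "gram_pairing u v = (\<Sum>\<alpha>\<in>UNIV. hnorm2 (u \<alpha>)) * (\<Sum>\<beta>\<in>UNIV. hnorm2 (v \<beta>))
      \<longleftrightarrow> (\<Sum>\<alpha>\<in>UNIV. \<Sum>\<beta>\<in>UNIV. hnorm2 (u \<alpha>) * hnorm2 (v \<beta>) - (cmod (hinner (u \<alpha>) (v \<beta>)))\<^sup>2) = 0"
    unfolding gram_pairing_def sum_product by (auto simp: sum_subtractf)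
  also have "\<dots> \<longleftrightarrow> (\<forall>\<alpha> \<beta>. (cmod (hinner (u \<alpha>) (v \<beta>)))\<^sup>2 = hnorm2 (u \<alpha>) * hnorm2 (v \<beta>))"
    using gap by (auto simp: sum_nonneg_eq_0_iff sum_nonneg)
  finally show ?thesis
    unfolding cauchy_schwarz_eq_iff_parallel by blast
qed

lemma gram_pairing_eq_0_iff: "gram_pairing u v = 0 \<longleftrightarrow> (\<forall>\<alpha> \<beta>. hinner (u \<alpha>) (v \<beta>) = 0)"
  unfolding gram_pairing_def by (simp add: sum_nonneg_eq_0_iff sum_nonneg)

lemma sum_UNIV_prod: "(\<Sum>p\<in>UNIV. f p) = (\<Sum>i\<in>UNIV. \<Sum>j\<in>UNIV. f (i, j))"
  by (simp add: sum.cartesian_product)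

lemma sum_UNIV_bool_prod:
  "(\<Sum>p\<in>UNIV. f p) = (\<Sum>i\<in>UNIV. \<Sum>j\<in>UNIV. f (False, i, j)) + (\<Sum>i\<in>UNIV. \<Sum>j\<in>UNIV. f (True, i, j))"
  by (simp add: sum_UNIV_prod[of f] sum_UNIV_prod[of "\<lambda>q. f (_, q)"] UNIV_bool)

lemma sum_indicator_mult:
  fixes f :: "'a::finite \<Rightarrow> 'b::semiring_1"
  shows "(\<Sum>x\<in>UNIV. (if x = a then 1 else 0) * f x) = f a"
  by (simp add: if_distrib[of "\<lambda>x. x * _"] cong: if_cong)

text \<open>The columns \<open>\<mu>(e\<^sub>i, e\<^sub>j)\<close> of the \<open>L\<^sub>i\<close>, and the conjugated rows of the \<open>L\<^sub>i\<close>
  (tag \<open>False\<close>) and of the \<open>R\<^sub>i\<close> (tag \<open>True\<close>).\<close>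

definition mu_cols :: "'n::finite alg \<Rightarrow> 'n \<times> 'n \<Rightarrow> 'n \<Rightarrow> complex" where
  "mu_cols mu p k = mu (fst p) (snd p) k"

definition mu_rows :: "'n::finite alg \<Rightarrow> bool \<times> 'n \<times> 'n \<Rightarrow> 'n \<Rightarrow> complex" where
  "mu_rows mu p k = (if fst p then cnj (mu k (fst (snd p)) (snd (snd p)))
                     else cnj (mu (fst (snd p)) k (snd (snd p))))"

lemma Mmu_eq_gram: "Mmu mu = 2 *\<^sub>R (gram (mu_cols mu) - gram (mu_rows mu))"
proof -
  have "gram (mu_cols mu) = (\<Sum>i\<in>UNIV. Lmat mu i ** adj (Lmat mu i))"
    unfolding vec_eq_iff
    by (simp add: gram_def mu_cols_def Lmat_def adj_def matrix_matrix_mult_def sum_component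
        sum.cartesian_product split_def)
  moreover have "gram (mu_rows mu)
      = (\<Sum>i\<in>UNIV. adj (Lmat mu i) ** Lmat mu i) + (\<Sum>i\<in>UNIV. adj (Rmat mu i) ** Rmat mu i)"
    unfolding vec_eq_iff gram_def
    by (simp only: vec_lambda_beta sum_UNIV_bool_prod)
       (simp add: mu_rows_def Lmat_def Rmat_def adj_def matrix_matrix_mult_def sum_component)
  ultimately show ?thesis
    by (simp add: Mmu_def algebra_simps)
qed

lemma trace_square_Mmu:
  "Re (trace (Mmu mu ** Mmu mu)) = 4 * (gram_pairing (mu_cols mu) (mu_cols mu)
     + gram_pairing (mu_rows mu) (mu_rows mu) - 2 * gram_pairing (mu_cols mu) (mu_rows mu))"
proof -
  have "trace (Mmu mu ** Mmu mu)
      = 4 *\<^sub>R trace ((gram (mu_cols mu) - gram (mu_rows mu)) ** (gram (mu_cols mu) - gram (mu_rows mu)))"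
    unfolding Mmu_eq_gram matrix_scalar_ac scalar_matrix_assoc[symmetric]
    by (simp add: trace_def scaleR_sum_right)
  then show ?thesis
    by (simp add: trace_square_gram_diff)
qed

lemma bil_axis: "bil mu (axis i 1) (axis j 1) $ k = mu i j k"
  unfolding bil_def axis_def vec_lambda_beta
  by (simp only: mult.assoc sum_distrib_left[symmetric] sum_indicator_mult)

lemma norm2_eq_sum: "norm2 mu = (\<Sum>i\<in>UNIV. \<Sum>j\<in>UNIV. \<Sum>k\<in>UNIV. (cmod (mu i j k))\<^sup>2)"
  unfolding norm2_def norm_vec_def L2_set_def bil_axis by (simp add: sum_nonneg)

lemma norm2_pos: "mu \<noteq> (\<lambda>i j k. 0) \<Longrightarrow> 0 < norm2 mu"
proof -
  assume "mu \<noteq> (\<lambda>i j k. 0)"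
  then obtain i j k where "mu i j k \<noteq> 0"
    by (meson ext)
  then have "0 < (cmod (mu i j k))\<^sup>2"
    by simp
  also have "\<dots> \<le> norm2 mu"
    unfolding norm2_eq_sum
    by (intro member_le_sum[THEN order_trans[rotated]] sum_nonneg) (auto intro!: sum_nonneg)
  finally show ?thesis .
qed

lemma sum_hnorm2_mu_cols: "(\<Sum>\<alpha>\<in>UNIV. hnorm2 (mu_cols mu \<alpha>)) = norm2 mu"
  by (simp add: sum_UNIV_prod hnorm2_def mu_cols_def norm2_eq_sum)

lemma sum_hnorm2_mu_rows: "(\<Sum>\<beta>\<in>UNIV. hnorm2 (mu_rows mu \<beta>)) = 2 * norm2 mu"
proof -
  have "(\<Sum>i\<in>UNIV. \<Sum>r\<in>UNIV. \<Sum>k\<in>UNIV. (cmod (mu k i r))\<^sup>2) = norm2 mu"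
    unfolding norm2_eq_sum by (subst sum.swap) (intro sum.cong refl sum.swap)
  moreover have "(\<Sum>i\<in>UNIV. \<Sum>r\<in>UNIV. \<Sum>k\<in>UNIV. (cmod (mu i k r))\<^sup>2) = norm2 mu"
    unfolding norm2_eq_sum by (intro sum.cong refl sum.swap)
  ultimately show ?thesis
    by (simp add: sum_UNIV_bool_prod hnorm2_def mu_rows_def)
qed

lemma Ffun_eq_gram_pairing:
  "Ffun mu = 4 * (gram_pairing (mu_cols mu) (mu_cols mu) + gram_pairing (mu_rows mu) (mu_rows mu)
     - 2 * gram_pairing (mu_cols mu) (mu_rows mu)) / (norm2 mu)\<^sup>2"
  unfolding Ffun_def trace_square_Mmu ..

lemma Ffun_le_20: "mu \<noteq> (\<lambda>i j k. 0) \<Longrightarrow> Ffun mu \<le> 20"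
  using gram_pairing_le[of "mu_cols mu" "mu_cols mu"] gram_pairing_le[of "mu_rows mu" "mu_rows mu"]
    gram_pairing_nonneg[of "mu_cols mu" "mu_rows mu"] norm2_pos[of mu]
  by (simp add: Ffun_eq_gram_pairing sum_hnorm2_mu_cols sum_hnorm2_mu_rows divide_le_eq power2_eq_square)

lemma Ffun_eq_20_iff:
  assumes "mu \<noteq> (\<lambda>i j k. 0)"
  shows "Ffun mu = 20 \<longleftrightarrow>
    gram_pairing (mu_cols mu) (mu_cols mu) = (norm2 mu)\<^sup>2 \<and>
    gram_pairing (mu_rows mu) (mu_rows mu) = 4 * (norm2 mu)\<^sup>2 \<and>
    gram_pairing (mu_cols mu) (mu_rows mu) = 0"
  using gram_pairing_le[of "mu_cols mu" "mu_cols mu"] gram_pairing_le[of "mu_rows mu" "mu_rows mu"]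
    gram_pairing_nonneg[of "mu_cols mu" "mu_rows mu"] norm2_pos[OF assms]
  by (simp add: Ffun_eq_gram_pairing sum_hnorm2_mu_cols sum_hnorm2_mu_rows divide_eq_eq power2_eq_square)
    linarith

definition rank_one_form :: "'n::finite alg \<Rightarrow> ('n \<Rightarrow> complex) \<Rightarrow> ('n \<Rightarrow> complex) \<Rightarrow> bool" where
  "rank_one_form mu \<psi> w \<longleftrightarrow> \<psi> \<noteq> (\<lambda>_. 0) \<and> w \<noteq> (\<lambda>_. 0) \<and> (\<Sum>q\<in>UNIV. \<psi> q * w q) = 0
     \<and> (\<forall>i j k. mu i j k = \<psi> i * \<psi> j * w k)"

lemma rank_one_form_nonzero: "rank_one_form mu \<psi> w \<Longrightarrow> mu \<noteq> (\<lambda>i j k. 0)"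
  unfolding rank_one_form_def by (metis mult_eq_0_iff)

lemma Ffun_rank_one_form:
  assumes rk: "rank_one_form mu \<psi> w"
  shows "Ffun mu = 20"
proof -
  have mu: "mu i j k = \<psi> i * \<psi> j * w k" for i j k
    using rk unfolding rank_one_form_def by blast
  have "gram_pairing (mu_cols mu) (mu_cols mu) = (norm2 mu)\<^sup>2"
    using gram_pairing_eq_iff_parallel[of "mu_cols mu" "mu_cols mu"]
    by (simp add: mu_cols_def mu sum_hnorm2_mu_cols power2_eq_square)
  moreover have "gram_pairing (mu_rows mu) (mu_rows mu) = 4 * (norm2 mu)\<^sup>2"
    using gram_pairing_eq_iff_parallel[of "mu_rows mu" "mu_rows mu"]
    by (simp add: mu_rows_def mu sum_hnorm2_mu_rows power2_eq_square)
  moreover have "hinner (mu_cols mu \<alpha>) (mu_rows mu \<beta>) = 0" for \<alpha> \<beta>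
  proof -
    have "hinner (mu_cols mu \<alpha>) (mu_rows mu \<beta>)
        = \<psi> (fst \<alpha>) * \<psi> (snd \<alpha>) * \<psi> (fst (snd \<beta>)) * w (snd (snd \<beta>)) * (\<Sum>q\<in>UNIV. \<psi> q * w q)"
      unfolding hinner_def sum_distrib_left by (intro sum.cong refl) (simp add: mu_cols_def mu_rows_def mu mult_ac)
    then show ?thesis
      using rk unfolding rank_one_form_def by simp
  qed
  ultimately show ?thesis
    using Ffun_eq_20_iff[OF rank_one_form_nonzero[OF rk]] gram_pairing_eq_0_iff by blast
qed

lemma parallel_mu_rows_imp_factorization:
  assumes par: "\<And>\<beta> \<beta>' k l. mu_rows mu \<beta> k * mu_rows mu \<beta>' l = mu_rows mu \<beta> l * mu_rows mu \<beta>' k"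
    and m0: "mu i0 j0 k0 \<noteq> 0"
  obtains \<psi> w where "\<psi> j0 \<noteq> 0" and "\<And>i j k. mu i j k = \<psi> i * \<psi> j * w k"
proof -
  define \<psi> where "\<psi> k = mu i0 k k0" for k
  have \<psi>0: "\<psi> j0 \<noteq> 0"
    using m0 by (simp add: \<psi>_def)
  have left: "mu i k r * \<psi> j0 = mu i j0 r * \<psi> k" for i k r
    using arg_cong[OF par[of "(False, i, r)" k "(False, i0, k0)" j0], of cnj]
    by (simp add: mu_rows_def \<psi>_def)
  have right: "mu k j r * \<psi> j0 = mu j0 j r * \<psi> k" for j k r
    using arg_cong[OF par[of "(True, j, r)" k "(False, i0, k0)" j0], of cnj]
    by (simp add: mu_rows_def \<psi>_def)
  have "mu i j k = \<psi> i * \<psi> j * (mu j0 j0 k / (\<psi> j0)\<^sup>2)" for i j k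
  proof -
    have "mu i j k * (\<psi> j0 * \<psi> j0) = \<psi> j * (mu i j0 k * \<psi> j0)"
      using left[of i j k] by (simp add: mult_ac)
    also have "\<dots> = \<psi> j * (mu j0 j0 k * \<psi> i)"
      using right[of i j0 k] by simp
    finally show ?thesis
      using \<psi>0 by (simp add: field_simps power2_eq_square)
  qed
  with \<psi>0 show thesis
    by (rule that)
qed

lemma Ffun_eq_20_imp_rank_one_form:
  assumes nz: "mu \<noteq> (\<lambda>i j k. 0)" and F: "Ffun mu = 20"
  obtains \<psi> w where "rank_one_form mu \<psi> w"
proof -
  obtain i0 j0 k0 where m0: "mu i0 j0 k0 \<noteq> 0"
    using nz by (meson ext)
  have rows: "gram_pairing (mu_rows mu) (mu_rows mu) = (\<Sum>\<beta>\<in>UNIV. hnorm2 (mu_rows mu \<beta>))\<^sup>2"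
    and orth: "gram_pairing (mu_cols mu) (mu_rows mu) = 0"
    using F unfolding Ffun_eq_20_iff[OF nz] sum_hnorm2_mu_rows by (simp_all add: power2_eq_square)
  have "mu_rows mu \<beta> k * mu_rows mu \<beta>' l = mu_rows mu \<beta> l * mu_rows mu \<beta>' k" for \<beta> \<beta>' k l
    using rows unfolding power2_eq_square gram_pairing_eq_iff_parallel by metis
  then obtain \<psi> w where \<psi>0: "\<psi> j0 \<noteq> 0" and mu: "\<And>i j k. mu i j k = \<psi> i * \<psi> j * w k"
    using parallel_mu_rows_imp_factorization[of mu, OF _ m0] by metis
  have w0: "w k0 \<noteq> 0"
    using m0 by (simp add: mu)
  have "\<psi> j0 * \<psi> j0 * \<psi> j0 * w k0 * (\<Sum>q\<in>UNIV. \<psi> q * w q)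
      = hinner (mu_cols mu (j0, j0)) (mu_rows mu (False, j0, k0))"
    unfolding hinner_def sum_distrib_left by (intro sum.cong refl) (simp add: mu_cols_def mu_rows_def mu mult_ac)
  also have "\<dots> = 0"
    using orth gram_pairing_eq_0_iff by blast
  finally have "(\<Sum>q\<in>UNIV. \<psi> q * w q) = 0"
    using \<psi>0 w0 by simp
  moreover have "\<psi> \<noteq> (\<lambda>_. 0)" "w \<noteq> (\<lambda>_. 0)"
    using \<psi>0 w0 by auto
  ultimately have "rank_one_form mu \<psi> w"
    unfolding rank_one_form_def using mu by blast
  then show thesis
    by (rule that)
qed

lemma Ffun_eq_20_iff_rank_one_form:
  assumes "mu \<noteq> (\<lambda>i j k. 0)"
  shows "Ffun mu = 20 \<longleftrightarrow> (\<exists>\<psi> w. rank_one_form mu \<psi> w)"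
proof
  assume "Ffun mu = 20"
  then obtain \<psi> w where "rank_one_form mu \<psi> w"
    by (rule Ffun_eq_20_imp_rank_one_form[OF assms])
  then show "\<exists>\<psi> w. rank_one_form mu \<psi> w"
    by blast
qed (use Ffun_rank_one_form in blast)

lemma bil_rank_one:
  assumes "\<And>i j k. mu i j k = \<psi> i * \<psi> j * w k"
  shows "bil mu x y = ((\<Sum>i\<in>UNIV. \<psi> i * x $ i) * (\<Sum>j\<in>UNIV. \<psi> j * y $ j)) *s (\<chi> k. w k)"
  unfolding bil_def assms vec_eq_iff vec_lambda_beta vector_smult_component sum_product sum_distrib_right
  by (intro allI sum.cong refl) (simp add: sum_distrib_left mult_ac)

lemma rank_one_form_associative:
  assumes rk: "rank_one_form mu \<psi> w"
  shows "associative mu"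
proof -
  have mu: "mu i j k = \<psi> i * \<psi> j * w k" for i j k
    using rk unfolding rank_one_form_def by blast
  have "(\<Sum>i\<in>UNIV. \<psi> i * (c *s (\<chi> k. w k)) $ i) = c * (\<Sum>q\<in>UNIV. \<psi> q * w q)" for c
    by (simp add: sum_distrib_left mult_ac)
  then have "(\<Sum>i\<in>UNIV. \<psi> i * (c *s (\<chi> k. w k)) $ i) = 0" for c
    using rk unfolding rank_one_form_def by simp
  then show ?thesis
    unfolding associative_def bil_rank_one[OF mu] by simp
qed

lemma bil_mu_ca: "bil (mu_ca a b) x y = (x $ a * y $ a) *s axis b 1"
proof -
  have inner: "(\<Sum>j\<in>UNIV. if i = a \<and> j = a then c else 0) = (if i = a then c else 0)" for i and c :: complex
    by (cases "i = a") auto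
  show ?thesis
    by (simp add: bil_def mu_ca_def vec_eq_iff axis_def if_distrib inner cong: if_cong)
qed

lemma rank_one_form_mu_ca:
  assumes "a \<noteq> b"
  shows "rank_one_form (mu_ca a b) (\<lambda>i. if i = a then 1 else 0) (\<lambda>k. if k = b then 1 else 0)"
  using assms unfolding rank_one_form_def by (auto simp: mu_ca_def fun_eq_iff sum_indicator_mult)

lemma matrix_inv_mult:
  fixes g :: "'a::semiring_1^'n::finite^'n"
  assumes "invertible g"
  shows "g ** matrix_inv g = mat 1" and "matrix_inv g ** g = mat 1"
  using someI_ex[OF assms[unfolded invertible_def]] unfolding matrix_inv_def by auto

lemma invertible_matrix_inv:
  fixes g :: "'a::semiring_1^'n::finite^'n"
  shows "invertible g \<Longrightarrow> invertible (matrix_inv g)"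
  unfolding invertible_def[of "matrix_inv g"] using matrix_inv_mult by blast

lemma matrix_inv_matrix_inv:
  fixes g :: "'a::semiring_1^'n::finite^'n"
  assumes g: "invertible g"
  shows "matrix_inv (matrix_inv g) = g"
proof -
  have "matrix_inv (matrix_inv g) = matrix_inv (matrix_inv g) ** (matrix_inv g ** g)"
    by (simp add: matrix_inv_mult[OF g])
  also have "\<dots> = g"
    by (simp add: matrix_mul_assoc matrix_inv_mult[OF invertible_matrix_inv[OF g]])
  finally show ?thesis .
qed

lemma isomorphic_iff_change_of_basis:
  fixes mu nu :: "'n::finite alg"
  shows "isomorphic mu nu \<longleftrightarrow>
    (\<exists>K. invertible K \<and> (\<forall>x y. bil mu (K *v x) (K *v y) = K *v bil nu x y))"
proof
  assume "isomorphic mu nu"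
  then obtain g where g: "invertible g"
    and h: "\<And>X Y. g *v bil mu (matrix_inv g *v X) (matrix_inv g *v Y) = bil nu X Y"
    unfolding isomorphic_def by blast
  have "bil mu (matrix_inv g *v x) (matrix_inv g *v y) = matrix_inv g *v bil nu x y" for x y
    unfolding h[symmetric] matrix_vector_mul_assoc matrix_inv_mult[OF g] by simp
  with invertible_matrix_inv[OF g]
  show "\<exists>K. invertible K \<and> (\<forall>x y. bil mu (K *v x) (K *v y) = K *v bil nu x y)"
    by blast
next
  assume "\<exists>K. invertible K \<and> (\<forall>x y. bil mu (K *v x) (K *v y) = K *v bil nu x y)"
  then obtain K where K: "invertible K" and h: "\<And>x y. bil mu (K *v x) (K *v y) = K *v bil nu x y"
    by blast
  show "isomorphic mu nu"
    unfolding isomorphic_def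
    using invertible_matrix_inv[OF K] matrix_inv_matrix_inv[OF K]
    by (metis h matrix_vector_mul_assoc matrix_inv_mult(2)[OF K] matrix_vector_mul_lid)
qed

lemma isomorphic_mu_ca_imp_rank_one_form:
  assumes ab: "a \<noteq> b" and iso: "isomorphic mu (mu_ca a b)"
  obtains \<psi> w where "rank_one_form mu \<psi> w"
proof -
  obtain K where K: "invertible K" and h: "\<And>x y. bil mu (K *v x) (K *v y) = K *v bil (mu_ca a b) x y"
    using iso unfolding isomorphic_iff_change_of_basis by blast
  define G where "G = matrix_inv K"
  have KG: "K *v (G *v x) = x" and GK: "G *v (K *v x) = x" for x
    by (simp_all add: G_def matrix_vector_mul_assoc matrix_inv_mult[OF K])
  define \<psi> where "\<psi> i = G $ a $ i" for i
  define w where "w k = (K *v axis b 1) $ k" for k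
  have "bil mu x y = ((G *v x) $ a * (G *v y) $ a) *s (K *v axis b 1)" for x y
    using h[of "G *v x" "G *v y"] unfolding KG bil_mu_ca vector_scalar_commute .
  then have mu: "mu i j k = \<psi> i * \<psi> j * w k" for i j k
    unfolding bil_axis[symmetric]
    by (simp add: \<psi>_def w_def matrix_vector_mult_def axis_def if_distrib[of "\<lambda>x. _ * x"] cong: if_cong)
  have "(\<Sum>q\<in>UNIV. \<psi> q * w q) = (G *v (K *v axis b 1)) $ a"
    by (simp add: \<psi>_def w_def matrix_vector_mult_def)
  then have orth: "(\<Sum>q\<in>UNIV. \<psi> q * w q) = 0"
    using ab by (simp add: GK axis_def)
  have "w \<noteq> (\<lambda>_. 0)"
  proof
    assume "w = (\<lambda>_. 0)"
    then have "K *v axis b 1 = 0"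
      by (simp add: w_def vec_eq_iff fun_eq_iff)
    then show False
      using GK[of "axis b 1"] by (simp add: axis_eq_0_iff)
  qed
  moreover have "\<psi> \<noteq> (\<lambda>_. 0)"
  proof
    assume "\<psi> = (\<lambda>_. 0)"
    then have "(G *v x) $ a = 0" for x
      by (simp add: \<psi>_def fun_eq_iff matrix_vector_mult_def)
    then show False
      using GK[of "axis a 1"] by (metis axis_nth one_neq_zero)
  qed
  ultimately show thesis
    using that mu orth unfolding rank_one_form_def by blast
qed

text \<open>\<open>K\<close> sends \<open>e\<^sub>b \<mapsto> w\<close>, \<open>e\<^sub>a \<mapsto> e\<^sub>a / \<psi>(a)\<close> and \<open>e\<^sub>c \<mapsto> e\<^sub>c - (\<psi>(c)/\<psi>(a)) e\<^sub>a\<close> otherwise,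
  so that \<open>\<psi> \<circ> K\<close> is the \<open>a\<close>-th coordinate when \<open>\<psi>(w) = 0\<close>.\<close>

definition adapted_basis :: "('n::finite \<Rightarrow> complex) \<Rightarrow> ('n \<Rightarrow> complex) \<Rightarrow> 'n \<Rightarrow> 'n \<Rightarrow> complex^'n^'n" where
  "adapted_basis \<psi> w a b = (\<chi> r c. if c = b then w r
     else if c = a then (if r = a then 1 / \<psi> a else 0)
     else (if r = c then 1 else 0) - (if r = a then \<psi> c / \<psi> a else 0))"

lemma adapted_basis_axis: "adapted_basis \<psi> w a b *v axis b 1 = (\<chi> k. w k)"
  unfolding adapted_basis_def matrix_vector_mult_def axis_def vec_eq_iff vec_lambda_beta
  by (simp add: mult.commute[of _ "if _ then 1 else 0"] sum_indicator_mult)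

lemma adapted_basis_column:
  assumes "\<psi> a \<noteq> 0" and "a \<noteq> b" and "(\<Sum>q\<in>UNIV. \<psi> q * w q) = 0"
  shows "(\<Sum>r\<in>UNIV. \<psi> r * adapted_basis \<psi> w a b $ r $ c) = (if c = a then 1 else 0)"
proof -
  consider "c = b" | "c = a" | "c \<noteq> a" "c \<noteq> b"
    by blast
  then show ?thesis
  proof cases
    case 3
    have "(\<Sum>r\<in>UNIV. \<psi> r * adapted_basis \<psi> w a b $ r $ c)
        = (\<Sum>r\<in>UNIV. (if r = c then 1 else 0) * \<psi> r) - (\<Sum>r\<in>UNIV. (if r = a then 1 else 0) * (\<psi> a * (\<psi> c / \<psi> a)))"
      unfolding sum_subtractf[symmetric] using 3
      by (intro sum.cong refl) (auto simp: adapted_basis_def right_diff_distrib)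
    then show ?thesis
      using 3 assms(1) by (simp only: sum_indicator_mult) simp
  qed (use assms in \<open>simp_all add: adapted_basis_def mult.commute[of "\<psi> _"] if_distrib[of "\<lambda>x. x * _"] cong: if_cong\<close>)
qed

lemma covector_adapted_basis:
  assumes "\<psi> a \<noteq> 0" and "a \<noteq> b" and "(\<Sum>q\<in>UNIV. \<psi> q * w q) = 0"
  shows "(\<Sum>r\<in>UNIV. \<psi> r * (adapted_basis \<psi> w a b *v z) $ r) = z $ a"
proof -
  have "(\<Sum>r\<in>UNIV. \<psi> r * (adapted_basis \<psi> w a b *v z) $ r)
      = (\<Sum>r\<in>UNIV. \<Sum>c\<in>UNIV. \<psi> r * adapted_basis \<psi> w a b $ r $ c * z $ c)"
    by (simp add: matrix_vector_mult_def sum_distrib_left mult.assoc)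
  also have "\<dots> = (\<Sum>c\<in>UNIV. (\<Sum>r\<in>UNIV. \<psi> r * adapted_basis \<psi> w a b $ r $ c) * z $ c)"
    by (subst sum.swap) (simp add: sum_distrib_right)
  also have "\<dots> = z $ a"
    unfolding adapted_basis_column[OF assms] by (rule sum_indicator_mult)
  finally show ?thesis .
qed

lemma invertible_adapted_basis:
  assumes \<psi>a: "\<psi> a \<noteq> 0" and ab: "a \<noteq> b" and orth: "(\<Sum>q\<in>UNIV. \<psi> q * w q) = 0" and wb: "w b \<noteq> 0"
  shows "invertible (adapted_basis \<psi> w a b)"
  unfolding invertible_left_inverse matrix_left_invertible_ker
proof (intro allI impI)
  fix z
  assume kz: "adapted_basis \<psi> w a b *v z = 0"
  have za: "z $ a = 0"
    using covector_adapted_basis[OF \<psi>a ab orth, of z] kz by simp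
  have row: "(adapted_basis \<psi> w a b *v z) $ r = w r * z $ b + (if r = b then 0 else z $ r)" if "r \<noteq> a" for r
  proof -
    have "adapted_basis \<psi> w a b $ r $ c * z $ c
        = (if c = b then w r * z $ b else 0) + (if c = r then (if r = b then 0 else z $ r) else 0)" for c
      using that za by (auto simp: adapted_basis_def)
    then show ?thesis
      by (simp add: matrix_vector_mult_def sum.distrib)
  qed
  have zb: "z $ b = 0"
    using row[of b] ab kz wb by simp
  have "z $ r = 0" for r
    using za zb row[of r] kz by (cases "r = a"; cases "r = b") auto
  then show "z = 0"
    by (simp add: vec_eq_iff)
qed

lemma rank_one_form_imp_isomorphic_mu_ca:
  assumes rk: "rank_one_form mu \<psi> w"
  obtains a b where "a \<noteq> b" and "isomorphic mu (mu_ca a b)"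
proof -
  have mu: "mu i j k = \<psi> i * \<psi> j * w k" for i j k
    using rk unfolding rank_one_form_def by blast
  have orth: "(\<Sum>q\<in>UNIV. \<psi> q * w q) = 0"
    using rk unfolding rank_one_form_def by blast
  obtain a where \<psi>a: "\<psi> a \<noteq> 0"
    using rk unfolding rank_one_form_def by (meson ext)
  obtain b where ba: "b \<noteq> a" and wb: "w b \<noteq> 0"
  proof (rule ccontr)
    assume "\<not> thesis"
    then have w: "w = (\<lambda>k. if k = a then w a else 0)"
      using that by force
    then have "\<psi> a * w a = 0"
      using orth by (subst (asm) w) (simp add: if_distrib[of "\<lambda>x. _ * x"] cong: if_cong)
    then show False
      using rk \<psi>a w unfolding rank_one_form_def by (metis mult_eq_0_iff)
  qed
  define K where "K = adapted_basis \<psi> w a b"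
  have "bil mu (K *v x) (K *v y) = K *v bil (mu_ca a b) x y" for x y
    unfolding bil_rank_one[OF mu] bil_mu_ca K_def covector_adapted_basis[OF \<psi>a ba[symmetric] orth]
    by (simp add: vector_scalar_commute adapted_basis_axis)
  then have "isomorphic mu (mu_ca a b)"
    unfolding isomorphic_iff_change_of_basis K_def
    using invertible_adapted_basis[OF \<psi>a ba[symmetric] orth wb] by blast
  with ba show thesis
    by (intro that) auto
qed

lemma isomorphic_mu_ca_iff_rank_one_form:
  "(\<exists>a b. a \<noteq> b \<and> isomorphic mu (mu_ca a b)) \<longleftrightarrow> (\<exists>\<psi> w. rank_one_form mu \<psi> w)"
proof
  assume "\<exists>a b. a \<noteq> b \<and> isomorphic mu (mu_ca a b)"
  then obtain a b where "a \<noteq> b" "isomorphic mu (mu_ca a b)"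
    by blast
  then obtain \<psi> w where "rank_one_form mu \<psi> w"
    by (rule isomorphic_mu_ca_imp_rank_one_form)
  then show "\<exists>\<psi> w. rank_one_form mu \<psi> w"
    by blast
next
  assume "\<exists>\<psi> w. rank_one_form mu \<psi> w"
  then obtain \<psi> w where "rank_one_form mu \<psi> w"
    by blast
  then obtain a b where "a \<noteq> b" "isomorphic mu (mu_ca a b)"
    by (rule rank_one_form_imp_isomorphic_mu_ca)
  then show "\<exists>a b. a \<noteq> b \<and> isomorphic mu (mu_ca a b)"
    by blast
qed

lemma Ffun_maximal_iff_eq_20:
  fixes mu :: "'n::finite alg"
  assumes "2 \<le> CARD('n)" and mu_nz: "mu \<noteq> (\<lambda>i j k. 0)"
  shows "(\<forall>nu::'n alg. associative nu \<and> nu \<noteq> (\<lambda>i j k. 0) \<longrightarrow> Ffun nu \<le> Ffun mu) \<longleftrightarrow> Ffun mu = 20"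
proof
  obtain a b :: 'n where "a \<noteq> b"
    using assms(1) card_le_Suc0_iff_eq[of "UNIV :: 'n set"] by fastforce
  then have ca: "rank_one_form (mu_ca a b) (\<lambda>i. if i = a then 1 else 0) (\<lambda>k. if k = b then 1 else 0)"
    by (rule rank_one_form_mu_ca)
  assume "\<forall>nu::'n alg. associative nu \<and> nu \<noteq> (\<lambda>i j k. 0) \<longrightarrow> Ffun nu \<le> Ffun mu"
  then have "Ffun (mu_ca a b) \<le> Ffun mu"
    using rank_one_form_associative[OF ca] rank_one_form_nonzero[OF ca] by blast
  then show "Ffun mu = 20"
    using Ffun_rank_one_form[OF ca] Ffun_le_20[OF mu_nz] by simp
next
  assume F: "Ffun mu = 20"
  show "\<forall>nu::'n alg. associative nu \<and> nu \<noteq> (\<lambda>i j k. 0) \<longrightarrow> Ffun nu \<le> Ffun mu"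
    unfolding F by (simp add: Ffun_le_20)
qed

theorem theorem4p9:
  fixes mu :: "'n::finite alg"
  assumes n3: "CARD('n) \<ge> 3"
    and mu_A: "associative mu" and mu_nz: "mu \<noteq> (\<lambda>i j k. 0)"
  shows "((\<forall>nu::'n alg. associative nu \<and> nu \<noteq> (\<lambda>i j k. 0) \<longrightarrow> Ffun nu \<le> Ffun mu)
           \<longleftrightarrow> (\<exists>a b. a \<noteq> b \<and> isomorphic mu (mu_ca a b)))
         \<and> ((\<exists>a b. a \<noteq> b \<and> isomorphic mu (mu_ca a b)) \<longrightarrow> Ffun mu = 20)"
  using Ffun_maximal_iff_eq_20[OF _ mu_nz] n3
  unfolding isomorphic_mu_ca_iff_rank_one_form Ffun_eq_20_iff_rank_one_form[OF mu_nz]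
  by simp

end
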